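(* Let $T\in\mathbb{R}$, let $v\ge2$ be an integer or $v=\infty$, and for each integer $2\le j<v+1$ let $S_j:\Delta_j\to\mathbb{R}$ be a continuous function, such that the family satisfies the coherence axiom: whenever $2\le m<n<v+1$, $1\le i_1<\cdots<i_m\le n$ and $p\in\Delta_n$ has $p_j=0$ for all $j\notin\{i_1,\ldots,i_m\}$, then $S_n(p_1,\ldots,p_n)=S_m(p_{i_1},\ldots,p_{i_m})$. Let $\mathbf{T}$ be an $(n,v)$-tree with $n\ge 2$. Then for all $x_1,\ldots,x_n\in\mathbb{R}$, $$(x_1\oplus_S\cdots\oplus_S x_n)_{\mathbf{T}}=\min_{p\in\Delta_n}\Big(\sum_{i=1}^np_ix_i-T\,S_{\mathbf{T}}(p_1,\ldots,p_n)\Big).$$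
   Context: $\Delta_k=\{p\in[0,\infty)^k:\sum_ip_i=1\}$. An $(n,v)$-tree is a finite rooted tree in which every vertex is either a leaf or has between $2$ and $v$ children, ordered from left to right, and whose $n$ leaves are labelled bijectively by $\{1,\ldots,n\}$. For $2\le m<v+1$ and $y_1,\ldots,y_m\in\mathbb{R}$ define the $m$-ary operation $\bigoplus_m(y_1,\ldots,y_m)=\min_{q\in\Delta_m}\big(\sum_jq_jy_j-T\,S_m(q)\big)$. For a tree (or subtree, whose leaves carry a label set) define recursively: a single leaf labelled $i$ has value $x_i$ and entropy $0$; if the root has subtrees $\mathbf{A}_1,\ldots,\mathbf{A}_m$ (left to right) with label sets $L_1,\ldots,L_m$, the value is $(x_1\oplus_S\cdots\oplus_Sx_n)_{\mathbf{T}}=\bigoplus_m(\text{value of }\mathbf{A}_1,\ldots,\text{value of }\mathbf{A}_m)$ and, for a probability vector $p$ indexed by the labels, with $P_j=\sum_{i\in L_j}p_i$, $$S_{\mathbf{T}}(p)=S_m(P_1,\ldots,P_m)+\sum_{j=1}^mP_j\,S_{\mathbf{A}_j}\big((p_i/P_j)_{i\in L_j}\big),$$ where a term with $P_j=0$ is taken to be $0$. *)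

theory Defs
  imports "HOL-Analysis.Analysis" "HOL-Library.Extended_Nat"
begin

text \<open>Probability prob_simplex Delta_k, realised inside nat => real (product topology):
  coordinates 0..<k, all other coordinates are 0.\<close>
definition prob_simplex :: "nat \<Rightarrow> (nat \<Rightarrow> real) set" where
  "prob_simplex k = {p. (\<forall>i. 0 \<le> p i) \<and> (\<forall>i\<ge>k. p i = 0) \<and> (\<Sum>i<k. p i) = 1}"

definition padvec :: "real list \<Rightarrow> nat \<Rightarrow> real" where
  "padvec ys = (\<lambda>k. if k < length ys then ys ! k else 0)"

definition coherent :: "enat \<Rightarrow> (nat \<Rightarrow> (nat \<Rightarrow> real) \<Rightarrow> real) \<Rightarrow> bool" where
  "coherent v S \<longleftrightarrow>
     (\<forall>m n \<sigma> p. 2 \<le> m \<and> m < n \<and> enat n \<le> v \<and>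
        strict_mono_on {..<m} \<sigma> \<and> (\<forall>k<m. \<sigma> k < n) \<and>
        p \<in> prob_simplex n \<and> (\<forall>j<n. j \<notin> \<sigma> ` {..<m} \<longrightarrow> p j = 0)
        \<longrightarrow> S n p = S m (\<lambda>k. if k < m then p (\<sigma> k) else 0))"

text \<open>The m-ary operation: minimum over the prob_simplex (taken as Inf; it is attained).\<close>
definition oplusm :: "real \<Rightarrow> (nat \<Rightarrow> (nat \<Rightarrow> real) \<Rightarrow> real) \<Rightarrow> real list \<Rightarrow> real" where
  "oplusm T S ys = Inf ((\<lambda>q. (\<Sum>j<length ys. q j * ys ! j) - T * S (length ys) q)
                          ` prob_simplex (length ys))"

datatype ltree = Leaf nat | Node "ltree list"

fun leaves :: "ltree \<Rightarrow> nat list" where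
  "leaves (Leaf i) = [i]"
| "leaves (Node ts) = concat (map leaves ts)"

fun arity_ok :: "enat \<Rightarrow> ltree \<Rightarrow> bool" where
  "arity_ok v (Leaf i) = True"
| "arity_ok v (Node ts) = (2 \<le> length ts \<and> enat (length ts) \<le> v \<and> (\<forall>t\<in>set ts. arity_ok v t))"

text \<open>(n,v)-tree; leaves labelled bijectively by {0..<n} (0-based labels).\<close>
definition nv_tree :: "nat \<Rightarrow> enat \<Rightarrow> ltree \<Rightarrow> bool" where
  "nv_tree n v t \<longleftrightarrow> arity_ok v t \<and> distinct (leaves t) \<and> set (leaves t) = {0..<n}"

fun tree_val :: "real \<Rightarrow> (nat \<Rightarrow> (nat \<Rightarrow> real) \<Rightarrow> real) \<Rightarrow> (nat \<Rightarrow> real) \<Rightarrow> ltree \<Rightarrow> real" where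
  "tree_val T S x (Leaf i) = x i"
| "tree_val T S x (Node ts) = oplusm T S (map (tree_val T S x) ts)"

definition mass :: "(nat \<Rightarrow> real) \<Rightarrow> ltree \<Rightarrow> real" where
  "mass p t = (\<Sum>i\<in>set (leaves t). p i)"

fun tree_entropy :: "(nat \<Rightarrow> (nat \<Rightarrow> real) \<Rightarrow> real) \<Rightarrow> ltree \<Rightarrow> (nat \<Rightarrow> real) \<Rightarrow> real" where
  "tree_entropy S (Leaf i) p = 0"
| "tree_entropy S (Node ts) p =
     S (length ts) (padvec (map (mass p) ts)) +
     sum_list (map (\<lambda>t. if mass p t = 0 then 0
                         else mass p t * tree_entropy S t (\<lambda>i. p i / mass p t)) ts)"

end

theory Submission
  imports Defs
begin

text \<open>At a node with children \<open>A\<^sub>1, \<dots>, A\<^sub>m\<close> the free energy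
  \<open>\<Sum> p\<^sub>i x\<^sub>i - T S\<^sub>T(p)\<close> splits, by the recursive (chain-rule) form of \<open>S\<^sub>T\<close>, into
  \<open>\<Sum>\<^sub>j P\<^sub>j F\<^sub>j(p/P\<^sub>j) - T S\<^sub>m(P)\<close>, where \<open>F\<^sub>j\<close> is the free energy of the \<open>j\<close>-th subtree.
  Minimising first over the conditional distributions \<open>p/P\<^sub>j\<close> (induction hypothesis) and
  then over the masses \<open>P \<in> \<Delta>\<^sub>m\<close> (definition of \<open>\<oplus>\<^sub>m\<close>) gives the claim; conversely every
  \<open>p\<close> arises from its masses and conditionals, so nothing smaller is possible.
  The minima exist because \<open>\<Delta>\<^sub>m\<close> is compact and \<open>S\<^sub>m\<close> continuous.\<close>

definition simplex_on :: "nat set \<Rightarrow> (nat \<Rightarrow> real) set" where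
  "simplex_on L = {p. (\<forall>i\<in>L. 0 \<le> p i) \<and> sum p L = 1}"

definition is_free_energy_min ::
    "real \<Rightarrow> (nat \<Rightarrow> real) \<Rightarrow> nat set \<Rightarrow> ((nat \<Rightarrow> real) \<Rightarrow> real) \<Rightarrow> real \<Rightarrow> bool" where
  "is_free_energy_min T x L E y \<longleftrightarrow>
     (\<exists>p\<in>simplex_on L. y = (\<Sum>i\<in>L. p i * x i) - T * E p) \<and>
     (\<forall>p\<in>simplex_on L. y \<le> (\<Sum>i\<in>L. p i * x i) - T * E p)"

lemma compact_prob_simplex: "compact (prob_simplex m)"
proof -
  have cube: "compact (PiE UNIV (\<lambda>_::nat. {0..1::real}))"
    using compactin_PiE[of "\<lambda>_. euclidean" UNIV "\<lambda>_::nat. {0..1::real}"]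
    by (simp add: euclidean_product_topology)
  have closed: "closed (prob_simplex m)"
    unfolding prob_simplex_def
    by (intro closed_Collect_conj closed_Collect_all closed_Collect_imp closed_Collect_le
        closed_Collect_eq continuous_intros) auto
  have "p i \<le> 1" if p: "p \<in> prob_simplex m" for p i
  proof (cases "i < m")
    case True
    then have "p i \<le> (\<Sum>j<m. p j)"
      using p by (intro member_le_sum) (auto simp: prob_simplex_def)
    then show ?thesis using p by (simp add: prob_simplex_def)
  qed (use p in \<open>simp add: prob_simplex_def\<close>)
  then have "prob_simplex m \<subseteq> PiE UNIV (\<lambda>_::nat. {0..1::real})"
    by (auto simp: prob_simplex_def)
  then show ?thesis
    using compact_Int_closed[OF cube closed] by (simp add: Int_absorb1)
qed

lemma prob_simplex_nonempty: "0 < m \<Longrightarrow> prob_simplex m \<noteq> {}"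
proof -
  assume "0 < m"
  then have "(\<lambda>i. if i = 0 then 1 else 0::real) \<in> prob_simplex m"
    by (auto simp: prob_simplex_def)
  then show ?thesis by blast
qed

lemma oplusm_attains_min:
  assumes "0 < length ys" and "continuous_on (prob_simplex (length ys)) (S (length ys))"
  shows "\<exists>q\<in>prob_simplex (length ys).
           oplusm T S ys = (\<Sum>j<length ys. q j * ys ! j) - T * S (length ys) q"
    and "\<forall>q\<in>prob_simplex (length ys).
           oplusm T S ys \<le> (\<Sum>j<length ys. q j * ys ! j) - T * S (length ys) q"
proof -
  let ?g = "\<lambda>q. (\<Sum>j<length ys. q j * ys ! j) - T * S (length ys) q"
  have "continuous_on (prob_simplex (length ys)) ?g"
    by (intro continuous_intros assms(2)
        continuous_on_product_then_coordinatewise[OF continuous_on_id])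
  then obtain q where q: "q \<in> prob_simplex (length ys)"
    and q_min: "\<forall>q'\<in>prob_simplex (length ys). ?g q \<le> ?g q'"
    using continuous_attains_inf[OF compact_prob_simplex prob_simplex_nonempty[OF assms(1)]]
    by blast
  have "oplusm T S ys = ?g q"
    unfolding oplusm_def using q q_min by (intro cInf_eq_minimum) auto
  then show "\<exists>q\<in>prob_simplex (length ys). oplusm T S ys = ?g q"
    and "\<forall>q\<in>prob_simplex (length ys). oplusm T S ys \<le> ?g q"
    using q q_min by auto
qed

lemma tree_entropy_cong:
  "(\<And>i. i \<in> set (leaves t) \<Longrightarrow> p i = p' i) \<Longrightarrow> tree_entropy S t p = tree_entropy S t p'"
proof (induction t arbitrary: p p')
  case (Leaf i)
  show ?case by simp
next
  case (Node ts)
  have mass: "mass p t = mass p' t" if "t \<in> set ts" for t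
    unfolding mass_def using Node.prems that by (intro sum.cong) auto
  have child: "tree_entropy S t (\<lambda>i. p i / mass p t) = tree_entropy S t (\<lambda>i. p' i / mass p' t)"
    if t: "t \<in> set ts" for t
  proof (rule Node.IH[OF t])
    fix i assume "i \<in> set (leaves t)"
    then have "p i = p' i" using t by (intro Node.prems) auto
    then show "p i / mass p t = p' i / mass p' t" using mass[OF t] by simp
  qed
  have "map (mass p) ts = map (mass p') ts"
    using mass by simp
  moreover have "map (\<lambda>t. if mass p t = 0 then 0 else mass p t * tree_entropy S t (\<lambda>i. p i / mass p t)) ts
    = map (\<lambda>t. if mass p' t = 0 then 0 else mass p' t * tree_entropy S t (\<lambda>i. p' i / mass p' t)) ts"
    using mass child by simp
  ultimately show ?case by (simp only: tree_entropy.simps)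
qed

lemma distinct_concat_map_nth_disjoint:
  "distinct (concat (map f xs)) \<Longrightarrow> i < length xs \<Longrightarrow> k < length xs \<Longrightarrow> i \<noteq> k
   \<Longrightarrow> set (f (xs ! i)) \<inter> set (f (xs ! k)) = {}"
proof (induction xs arbitrary: i k)
  case Nil
  then show ?case by simp
next
  case (Cons a xs)
  show ?case
  proof (cases i)
    case 0
    then obtain k' where "k = Suc k'" using Cons by (cases k) auto
    then show ?thesis using Cons 0 nth_mem[of k' xs] by fastforce
  next
    case (Suc i')
    show ?thesis
    proof (cases k)
      case 0
      then show ?thesis using Cons Suc nth_mem[of i' xs] by fastforce
    next
      case (Suc k')
      then show ?thesis using Cons \<open>i = Suc i'\<close> by auto
    qed
  qed
qed

lemma set_leaves_Node: "set (leaves (Node ts)) = (\<Union>j<length ts. set (leaves (ts ! j)))"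
proof -
  have "set ts = (\<lambda>j. ts ! j) ` {..<length ts}"
    by (auto simp: in_set_conv_nth)
  then show ?thesis by simp
qed

lemma disjoint_family_leaves_Node:
  "distinct (leaves (Node ts)) \<Longrightarrow>
     disjoint_family_on (\<lambda>j. set (leaves (ts ! j))) {..<length ts}"
  unfolding disjoint_family_on_def using distinct_concat_map_nth_disjoint[of leaves ts] by auto

lemma sum_leaves_Node:
  assumes "distinct (leaves (Node ts))"
  shows "sum f (set (leaves (Node ts))) = (\<Sum>j<length ts. sum f (set (leaves (ts ! j))))"
  unfolding set_leaves_Node using disjoint_family_leaves_Node[OF assms]
  by (intro sum.UNION_disjoint) (auto simp: disjoint_family_on_def)

lemma free_energy_Node:
  assumes "distinct (leaves (Node ts))"
  shows "(\<Sum>i\<in>set (leaves (Node ts)). p i * x i) - T * tree_entropy S (Node ts) p =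
    (\<Sum>j<length ts. (\<Sum>i\<in>set (leaves (ts ! j)). p i * x i)
       - T * (if mass p (ts ! j) = 0 then 0
              else mass p (ts ! j) * tree_entropy S (ts ! j) (\<lambda>i. p i / mass p (ts ! j))))
    - T * S (length ts) (padvec (map (mass p) ts))"
  using sum_leaves_Node[OF assms, of "\<lambda>i. p i * x i"]
  by (simp add: sum_list_sum_nth atLeast0LessThan sum_subtractf sum_distrib_left ring_distribs)

lemma padvec_mass_in_prob_simplex:
  assumes "distinct (leaves (Node ts))" and "p \<in> simplex_on (set (leaves (Node ts)))"
  shows "padvec (map (mass p) ts) \<in> prob_simplex (length ts)"
proof -
  have "0 \<le> mass p (ts ! j)" if "j < length ts" for j
    using assms(2) that unfolding mass_def simplex_on_def set_leaves_Node
    by (intro sum_nonneg) auto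
  moreover have "(\<Sum>j<length ts. mass p (ts ! j)) = 1"
    using sum_leaves_Node[OF assms(1), of p] assms(2) by (simp add: mass_def simplex_on_def)
  ultimately show ?thesis
    by (auto simp: prob_simplex_def padvec_def)
qed

text \<open>The term \<open>P E(p/P)\<close>, read as 0 when \<open>P = 0\<close>, is how a subtree of mass \<open>P\<close> enters
  tree_entropy.\<close>

lemma is_free_energy_min_scaled_le:
  assumes min: "is_free_energy_min T x L E y" and "finite L" and nonneg: "\<forall>i\<in>L. 0 \<le> p i"
  shows "sum p L * y \<le> (\<Sum>i\<in>L. p i * x i)
           - T * (if sum p L = 0 then 0 else sum p L * E (\<lambda>i. p i / sum p L))"
proof (cases "sum p L = 0")
  case True
  then have "\<forall>i\<in>L. p i = 0"
    using sum_nonneg_eq_0_iff[OF \<open>finite L\<close>] nonneg by blast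
  then show ?thesis using True by simp
next
  case False
  let ?c = "sum p L"
  have "0 \<le> ?c" using nonneg by (simp add: sum_nonneg)
  with False have c: "0 < ?c" by simp
  have "(\<lambda>i. p i / ?c) \<in> simplex_on L"
    using nonneg c by (auto simp: simplex_on_def sum_divide_distrib[symmetric])
  then have "y \<le> (\<Sum>i\<in>L. p i / ?c * x i) - T * E (\<lambda>i. p i / ?c)"
    using min by (auto simp: is_free_energy_min_def)
  then have "?c * y \<le> ?c * ((\<Sum>i\<in>L. p i / ?c * x i) - T * E (\<lambda>i. p i / ?c))"
    using c by (simp add: mult_left_mono)
  also have "\<dots> = (\<Sum>i\<in>L. p i * x i) - T * (?c * E (\<lambda>i. p i / ?c))"
    using c by (simp add: right_diff_distrib sum_distrib_left)
  finally show ?thesis using False by (simp add: mult.commute)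
qed

lemma sum_scaled_simplex_on:
  assumes "r \<in> simplex_on L" and "\<forall>i\<in>L. p i = c * r i"
  shows "sum p L = c"
proof -
  have "sum p L = c * sum r L" using assms(2) by (simp add: sum_distrib_left)
  then show ?thesis using assms(1) by (simp add: simplex_on_def)
qed

lemma scaled_free_energy_eq:
  assumes r: "r \<in> simplex_on L" and p: "\<forall>i\<in>L. p i = c * r i"
    and E_cong: "\<And>p p'. (\<And>i. i \<in> L \<Longrightarrow> p i = p' i) \<Longrightarrow> E p = E p'"
  shows "(\<Sum>i\<in>L. p i * x i) - T * (if sum p L = 0 then 0 else sum p L * E (\<lambda>i. p i / sum p L))
         = c * ((\<Sum>i\<in>L. r i * x i) - T * E r)"
proof -
  have mass: "sum p L = c" using r p by (rule sum_scaled_simplex_on)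
  have px: "(\<Sum>i\<in>L. p i * x i) = c * (\<Sum>i\<in>L. r i * x i)"
    using p by (simp add: sum_distrib_left mult.assoc)
  show ?thesis
  proof (cases "c = 0")
    case False
    have "E (\<lambda>i. p i / c) = E r" using p False by (intro E_cong) simp
    then show ?thesis using False by (simp add: mass px right_diff_distrib)
  qed (simp add: mass px)
qed

lemma compound_in_simplex_on:
  assumes disj: "disjoint_family_on L {..<m}" and fin: "\<forall>j<m. finite (L j)"
    and q: "q \<in> prob_simplex m" and r: "\<forall>j<m. r j \<in> simplex_on (L j)"
  obtains p where "p \<in> simplex_on (\<Union>j<m. L j)" and "\<forall>j<m. \<forall>i\<in>L j. p i = q j * r j i"
proof -
  define p where "p = (\<lambda>i. \<Sum>k<m. if i \<in> L k then q k * r k i else 0)"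
  have block: "p i = q j * r j i" if j: "j < m" and i: "i \<in> L j" for j i
  proof -
    have "p i = (\<Sum>k<m. if k = j then q j * r j i else 0)"
      unfolding p_def using disj j i by (intro sum.cong) (auto simp: disjoint_family_on_def)
    then show ?thesis using j by simp
  qed
  have q_nonneg: "0 \<le> q k" and q_sum: "(\<Sum>k<m. q k) = 1" for k
    using q by (auto simp: prob_simplex_def)
  have "\<forall>i\<in>(\<Union>j<m. L j). 0 \<le> p i"
    using block q_nonneg r by (fastforce simp: simplex_on_def)
  moreover have "sum p (L j) = q j" if "j < m" for j
    using block[OF that] r that by (simp add: sum_distrib_left[symmetric] simplex_on_def)
  then have "sum p (\<Union>j<m. L j) = 1"
    using q_sum disj fin by (subst sum.UNION_disjoint) (auto simp: disjoint_family_on_def)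
  ultimately have "p \<in> simplex_on (\<Union>j<m. L j)"
    by (simp add: simplex_on_def)
  with block show ?thesis using that by blast
qed

lemma tree_val_Node_is_min:
  assumes "0 < length ts" and "continuous_on (prob_simplex (length ts)) (S (length ts))"
  shows "\<exists>q\<in>prob_simplex (length ts). tree_val T S x (Node ts) =
           (\<Sum>j<length ts. q j * tree_val T S x (ts ! j)) - T * S (length ts) q"
    and "\<forall>q\<in>prob_simplex (length ts). tree_val T S x (Node ts) \<le>
           (\<Sum>j<length ts. q j * tree_val T S x (ts ! j)) - T * S (length ts) q"
  using oplusm_attains_min[of "map (tree_val T S x) ts" S T] assms by simp_all

lemma tree_val_Node_le:
  assumes dist: "distinct (leaves (Node ts))"
    and children: "\<And>t. t \<in> set ts \<Longrightarrow>
          is_free_energy_min T x (set (leaves t)) (tree_entropy S t) (tree_val T S x t)"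
    and node: "\<forall>q\<in>prob_simplex (length ts). tree_val T S x (Node ts) \<le>
          (\<Sum>j<length ts. q j * tree_val T S x (ts ! j)) - T * S (length ts) q"
    and p: "p \<in> simplex_on (set (leaves (Node ts)))"
  shows "tree_val T S x (Node ts) \<le>
           (\<Sum>i\<in>set (leaves (Node ts)). p i * x i) - T * tree_entropy S (Node ts) p"
proof -
  let ?q = "padvec (map (mass p) ts)"
  have child: "mass p (ts ! j) * tree_val T S x (ts ! j) \<le> (\<Sum>i\<in>set (leaves (ts ! j)). p i * x i)
      - T * (if mass p (ts ! j) = 0 then 0
             else mass p (ts ! j) * tree_entropy S (ts ! j) (\<lambda>i. p i / mass p (ts ! j)))"
    if j: "j < length ts" for j
  proof -
    have "\<forall>i\<in>set (leaves (ts ! j)). 0 \<le> p i"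
      using p j by (auto simp: simplex_on_def set_leaves_Node)
    then show ?thesis
      unfolding mass_def using children[OF nth_mem[OF j]]
      by (intro is_free_energy_min_scaled_le) auto
  qed
  have "tree_val T S x (Node ts) \<le>
      (\<Sum>j<length ts. ?q j * tree_val T S x (ts ! j)) - T * S (length ts) ?q"
    using node padvec_mass_in_prob_simplex[OF dist p] by blast
  also have "\<dots> = (\<Sum>j<length ts. mass p (ts ! j) * tree_val T S x (ts ! j))
      - T * S (length ts) ?q"
    by (simp add: padvec_def)
  also have "\<dots> \<le> (\<Sum>i\<in>set (leaves (Node ts)). p i * x i) - T * tree_entropy S (Node ts) p"
    unfolding free_energy_Node[OF dist] using child by (intro diff_right_mono sum_mono) auto
  finally show ?thesis .
qed

lemma tree_val_Node_attained:
  assumes dist: "distinct (leaves (Node ts))"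
    and children: "\<And>t. t \<in> set ts \<Longrightarrow>
          is_free_energy_min T x (set (leaves t)) (tree_entropy S t) (tree_val T S x t)"
    and q: "q \<in> prob_simplex (length ts)"
    and node: "tree_val T S x (Node ts) =
          (\<Sum>j<length ts. q j * tree_val T S x (ts ! j)) - T * S (length ts) q"
  shows "\<exists>p\<in>simplex_on (set (leaves (Node ts))). tree_val T S x (Node ts) =
           (\<Sum>i\<in>set (leaves (Node ts)). p i * x i) - T * tree_entropy S (Node ts) p"
proof -
  let ?m = "length ts" and ?L = "\<lambda>j. set (leaves (ts ! j))"
  have "\<exists>r. \<forall>j\<in>{..<?m}. r j \<in> simplex_on (?L j) \<and>
      tree_val T S x (ts ! j) = (\<Sum>i\<in>?L j. r j i * x i) - T * tree_entropy S (ts ! j) (r j)"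
  proof (rule bchoice, rule ballI)
    fix j assume "j \<in> {..<?m}"
    then have "ts ! j \<in> set ts" by simp
    from children[OF this] show "\<exists>r. r \<in> simplex_on (?L j) \<and>
        tree_val T S x (ts ! j) = (\<Sum>i\<in>?L j. r i * x i) - T * tree_entropy S (ts ! j) r"
      unfolding is_free_energy_min_def by (elim conjE bexE) blast
  qed
  then obtain r where r_spec: "\<forall>j\<in>{..<?m}. r j \<in> simplex_on (?L j) \<and>
      tree_val T S x (ts ! j) = (\<Sum>i\<in>?L j. r j i * x i) - T * tree_entropy S (ts ! j) (r j)"
    ..
  then have r: "\<forall>j<?m. r j \<in> simplex_on (?L j)"
    and r_val: "\<And>j. j < ?m \<Longrightarrow>
      tree_val T S x (ts ! j) = (\<Sum>i\<in>?L j. r j i * x i) - T * tree_entropy S (ts ! j) (r j)"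
    unfolding lessThan_iff Ball_def by simp_all
  have "\<forall>j<?m. finite (?L j)" by simp
  then obtain p where p: "p \<in> simplex_on (\<Union>j<?m. ?L j)"
    and block: "\<forall>j<?m. \<forall>i\<in>?L j. p i = q j * r j i"
    by (rule compound_in_simplex_on[OF disjoint_family_leaves_Node[OF dist] _ q r])
  have mass: "mass p (ts ! j) = q j" if "j < ?m" for j
    unfolding mass_def using r that block by (intro sum_scaled_simplex_on) auto
  have child: "(\<Sum>i\<in>?L j. p i * x i) - T * (if mass p (ts ! j) = 0 then 0
        else mass p (ts ! j) * tree_entropy S (ts ! j) (\<lambda>i. p i / mass p (ts ! j)))
      = q j * tree_val T S x (ts ! j)" if j: "j < ?m" for j
    unfolding mass_def r_val[OF j]
    using r j block by (intro scaled_free_energy_eq[where E = "tree_entropy S (ts ! j)"])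
      (auto intro: tree_entropy_cong)
  have "padvec (map (mass p) ts) = q"
    using q mass by (intro ext) (auto simp: padvec_def prob_simplex_def)
  then have "(\<Sum>i\<in>set (leaves (Node ts)). p i * x i) - T * tree_entropy S (Node ts) p
      = tree_val T S x (Node ts)"
    unfolding free_energy_Node[OF dist] node using child by simp
  moreover have "p \<in> simplex_on (set (leaves (Node ts)))"
    unfolding set_leaves_Node by (fact p)
  ultimately show ?thesis by metis
qed

lemma tree_val_is_free_energy_min:
  assumes cont: "\<And>j. 2 \<le> j \<Longrightarrow> enat j \<le> v \<Longrightarrow> continuous_on (prob_simplex j) (S j)"
  shows "arity_ok v t \<Longrightarrow> distinct (leaves t) \<Longrightarrow>
    is_free_energy_min T x (set (leaves t)) (tree_entropy S t) (tree_val T S x t)"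
proof (induction t)
  case (Leaf i)
  have "(\<lambda>_. 1) \<in> simplex_on {i}" by (simp add: simplex_on_def)
  then show ?case by (auto simp: is_free_energy_min_def simplex_on_def)
next
  case (Node ts)
  have children: "is_free_energy_min T x (set (leaves t)) (tree_entropy S t) (tree_val T S x t)"
    if "t \<in> set ts" for t
    using Node that by (auto simp: distinct_concat_iff)
  have "0 < length ts" "continuous_on (prob_simplex (length ts)) (S (length ts))"
    using Node.prems cont by auto
  note node = tree_val_Node_is_min[of ts S T x, OF this]
  then obtain q where "q \<in> prob_simplex (length ts)"
    and "tree_val T S x (Node ts) =
      (\<Sum>j<length ts. q j * tree_val T S x (ts ! j)) - T * S (length ts) q"
    by blast
  then show ?case
    unfolding is_free_energy_min_def
    using tree_val_Node_attained[OF Node.prems(2) children]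
      tree_val_Node_le[OF Node.prems(2) children node(2)]
    by blast
qed

lemma is_free_energy_min_prob_simplex:
  assumes min: "is_free_energy_min T x {..<n} E y"
    and E_cong: "\<And>p p'. (\<And>i. i < n \<Longrightarrow> p i = p' i) \<Longrightarrow> E p = E p'"
  shows "(\<exists>p\<in>prob_simplex n. y = (\<Sum>i<n. p i * x i) - T * E p)
       \<and> (\<forall>p\<in>prob_simplex n. y \<le> (\<Sum>i<n. p i * x i) - T * E p)"
proof
  obtain p where p: "p \<in> simplex_on {..<n}" and y: "y = (\<Sum>i<n. p i * x i) - T * E p"
    using min by (auto simp: is_free_energy_min_def)
  define p' where "p' = (\<lambda>i. if i < n then p i else 0)"
  have "p' \<in> prob_simplex n"
    using p by (auto simp: p'_def prob_simplex_def simplex_on_def)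
  moreover have "E p' = E p" by (rule E_cong) (simp add: p'_def)
  moreover have "(\<Sum>i<n. p' i * x i) = (\<Sum>i<n. p i * x i)" by (simp add: p'_def)
  ultimately show "\<exists>p\<in>prob_simplex n. y = (\<Sum>i<n. p i * x i) - T * E p"
    using y by metis
  have "prob_simplex n \<subseteq> simplex_on {..<n}"
    by (auto simp: prob_simplex_def simplex_on_def)
  then show "\<forall>p\<in>prob_simplex n. y \<le> (\<Sum>i<n. p i * x i) - T * E p"
    using min by (auto simp: is_free_energy_min_def)
qed

theorem theorem10p9:
  fixes T :: real and v :: enat and S :: "nat \<Rightarrow> (nat \<Rightarrow> real) \<Rightarrow> real"
    and n :: nat and t :: ltree and x :: "nat \<Rightarrow> real"
  assumes "v \<ge> 2"
    and "\<And>j. 2 \<le> j \<Longrightarrow> enat j \<le> v \<Longrightarrow> continuous_on (prob_simplex j) (S j)"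
    and "coherent v S"
    and "nv_tree n v t" and "n \<ge> 2"
  shows "(\<exists>p\<in>prob_simplex n. tree_val T S x t = (\<Sum>i<n. p i * x i) - T * tree_entropy S t p)
       \<and> (\<forall>p\<in>prob_simplex n. tree_val T S x t \<le> (\<Sum>i<n. p i * x i) - T * tree_entropy S t p)"
proof (rule is_free_energy_min_prob_simplex)
  have leaves: "set (leaves t) = {..<n}" and "arity_ok v t" and "distinct (leaves t)"
    using assms(4) by (auto simp: nv_tree_def)
  from this(2,3) have "is_free_energy_min T x (set (leaves t)) (tree_entropy S t) (tree_val T S x t)"
    by (intro tree_val_is_free_energy_min) (use assms(2) in auto)
  then show "is_free_energy_min T x {..<n} (tree_entropy S t) (tree_val T S x t)"
    unfolding leaves .
  show "tree_entropy S t p = tree_entropy S t p'" if "\<And>i. i < n \<Longrightarrow> p i = p' i" for p p'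
    using that by (intro tree_entropy_cong) (simp add: leaves)
qed

end
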